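(* Assume $\mathrm{char}(\mathbb{F}_q)>3$. Then $\mathfrak{sl}_2(\mathbb{F}_q)$ has a COD, unique up to conjugacy, if and only if $q\equiv 1\pmod 4$.
   Context: $\mathbb{F}_q$ is the finite field with $q$ elements. $\mathfrak{sl}_n(\mathbb{F})$ denotes the Lie algebra of $n\times n$ traceless matrices over $\mathbb{F}$. A Cartan subalgebra is a nilpotent self-normalizing subalgebra. A classical Cartan subalgebra of $\mathfrak{L}=\mathfrak{sl}_n(\mathbb{F})$ (with $\ell=\mathrm{char}\,\mathbb{F}$) is an abelian Cartan subalgebra $H$ such that: (a) $\mathfrak{L}=\bigoplus_\alpha \mathfrak{L}_\alpha$ with $\mathfrak{L}_\alpha=\{x: [x,h]=\alpha(h)x\ \forall h\in H\}$ over linear functionals $\alpha$ on $H$ (roots); (b) for each root $\alpha\ne0$, $[\mathfrak{L}_\alpha,\mathfrak{L}_{-\alpha}]$ is one-dimensional; (c) for roots $\alpha,\beta$ with $\beta\neq0$, not all $\alpha+k\beta$ ($1\le k\le \ell-1$) are roots. The Killing form is $K(A,B)=2n\,\mathrm{Tr}(AB)$. A COD of $\mathfrak{sl}_n(\mathbb{F})$ is a vector space decomposition $\mathfrak{sl}_n(\mathbb{F})=H_0\oplus\cdots\oplus H_n$ into classical Cartan subalgebras that are pairwise orthogonal with respect to $K$. Two CODs are conjugate if there is a Lie algebra automorphism of $\mathfrak{sl}_n(\mathbb{F})$ mapping each component of the first decomposition onto exactly one component of the second. *)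

theory Defs
  imports "HOL-Analysis.Analysis"
begin

type_synonym 'a mat2 = "'a^2^2"

definition smul :: "'a::field \<Rightarrow> 'a mat2 \<Rightarrow> 'a mat2" where
  "smul c A = (\<chi> i j. c * A $ i $ j)"

definition sl2 :: "('a::field) mat2 set" where
  "sl2 = {A. trace A = 0}"

definition lie_bracket :: "('a::field) mat2 \<Rightarrow> 'a mat2 \<Rightarrow> 'a mat2" where
  "lie_bracket x y = x ** y - y ** x"

definition killing :: "('a::field) mat2 \<Rightarrow> 'a mat2 \<Rightarrow> 'a" where
  "killing A B = 2 * 2 * trace (A ** B)"

definition lin_subspace :: "('a::field) mat2 set \<Rightarrow> bool" where
  "lin_subspace S \<longleftrightarrow> 0 \<in> S \<and> (\<forall>x\<in>S. \<forall>y\<in>S. x + y \<in> S) \<and> (\<forall>c. \<forall>x\<in>S. smul c x \<in> S)"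

definition lspan :: "('a::field) mat2 set \<Rightarrow> 'a mat2 set" where
  "lspan S = \<Inter> {T. lin_subspace T \<and> S \<subseteq> T}"

definition one_dimensional :: "('a::field) mat2 set \<Rightarrow> bool" where
  "one_dimensional S \<longleftrightarrow> (\<exists>v. v \<noteq> 0 \<and> S = {smul c v | c. True})"

definition subalgebra :: "('a::field) mat2 set \<Rightarrow> bool" where
  "subalgebra H \<longleftrightarrow> lin_subspace H \<and> H \<subseteq> sl2 \<and> (\<forall>x\<in>H. \<forall>y\<in>H. lie_bracket x y \<in> H)"

fun lcs :: "('a::field) mat2 set \<Rightarrow> nat \<Rightarrow> 'a mat2 set" where
  "lcs H 0 = H"
| "lcs H (Suc k) = lspan {lie_bracket x y | x y. x \<in> H \<and> y \<in> lcs H k}"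

definition nilpotent_alg :: "('a::field) mat2 set \<Rightarrow> bool" where
  "nilpotent_alg H \<longleftrightarrow> (\<exists>k. lcs H k \<subseteq> {0})"

definition normalizer :: "('a::field) mat2 set \<Rightarrow> 'a mat2 set" where
  "normalizer H = {x \<in> sl2. \<forall>h\<in>H. lie_bracket x h \<in> H}"

definition cartan :: "('a::field) mat2 set \<Rightarrow> bool" where
  "cartan H \<longleftrightarrow> subalgebra H \<and> nilpotent_alg H \<and> normalizer H = H"

definition abelian :: "('a::field) mat2 set \<Rightarrow> bool" where
  "abelian H \<longleftrightarrow> (\<forall>x\<in>H. \<forall>y\<in>H. lie_bracket x y = 0)"

text \<open>Linear functionals on H, represented as functions that vanish outside H
  (so that each functional on H has exactly one representative).\<close>
definition functional_on :: "('a::field) mat2 set \<Rightarrow> ('a mat2 \<Rightarrow> 'a) \<Rightarrow> bool" where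
  "functional_on H \<alpha> \<longleftrightarrow> (\<forall>x\<in>H. \<forall>y\<in>H. \<alpha> (x + y) = \<alpha> x + \<alpha> y)
      \<and> (\<forall>c. \<forall>x\<in>H. \<alpha> (smul c x) = c * \<alpha> x) \<and> (\<forall>x. x \<notin> H \<longrightarrow> \<alpha> x = 0)"

definition root_space :: "('a::field) mat2 set \<Rightarrow> ('a mat2 \<Rightarrow> 'a) \<Rightarrow> 'a mat2 set" where
  "root_space H \<alpha> = {x \<in> sl2. \<forall>h\<in>H. lie_bracket x h = smul (\<alpha> h) x}"

definition roots :: "('a::field) mat2 set \<Rightarrow> ('a mat2 \<Rightarrow> 'a) set" where
  "roots H = {\<alpha>. functional_on H \<alpha> \<and> root_space H \<alpha> \<noteq> {0}}"

definition classical_cartan :: "('a::{finite,field}) mat2 set \<Rightarrow> bool" where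
  "classical_cartan H \<longleftrightarrow> cartan H \<and> abelian H
   \<comment> \<open>(a) sl2 is the direct sum of the root spaces\<close>
   \<and> (\<forall>x\<in>sl2. \<exists>!f. (\<forall>\<alpha>. \<alpha> \<notin> roots H \<longrightarrow> f \<alpha> = 0)
          \<and> (\<forall>\<alpha>\<in>roots H. f \<alpha> \<in> root_space H \<alpha>) \<and> x = (\<Sum>\<alpha>\<in>roots H. f \<alpha>))
   \<comment> \<open>(b)\<close>
   \<and> (\<forall>\<alpha>\<in>roots H. \<alpha> \<noteq> (\<lambda>_. 0) \<longrightarrow>
        one_dimensional (lspan {lie_bracket x y | x y. x \<in> root_space H \<alpha>
                                  \<and> y \<in> root_space H (\<lambda>h. - \<alpha> h)}))
   \<comment> \<open>(c)\<close>
   \<and> (\<forall>\<alpha>\<in>roots H. \<forall>\<beta>\<in>roots H. \<beta> \<noteq> (\<lambda>_. 0) \<longrightarrow>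
        (\<exists>k\<in>{1..CHAR('a) - 1}. (\<lambda>h. \<alpha> h + of_nat k * \<beta> h) \<notin> roots H))"

text \<open>A COD of sl_2 (n = 2): components H 0, H 1, H 2.\<close>
definition is_COD :: "(nat \<Rightarrow> ('a::{finite,field}) mat2 set) \<Rightarrow> bool" where
  "is_COD H \<longleftrightarrow> (\<forall>i\<le>2. classical_cartan (H i))
    \<and> (\<forall>i\<le>2. \<forall>j\<le>2. i \<noteq> j \<longrightarrow> (\<forall>x\<in>H i. \<forall>y\<in>H j. killing x y = 0))
    \<and> (\<forall>x\<in>sl2. \<exists>!h. (\<forall>i\<le>2. h i \<in> H i) \<and> (\<forall>i>2. h i = 0) \<and> x = (\<Sum>i\<le>2. h i))"

definition lie_automorphism :: "(('a::field) mat2 \<Rightarrow> 'a mat2) \<Rightarrow> bool" where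
  "lie_automorphism \<phi> \<longleftrightarrow> bij_betw \<phi> sl2 sl2
    \<and> (\<forall>x\<in>sl2. \<forall>y\<in>sl2. \<phi> (x + y) = \<phi> x + \<phi> y)
    \<and> (\<forall>c. \<forall>x\<in>sl2. \<phi> (smul c x) = smul c (\<phi> x))
    \<and> (\<forall>x\<in>sl2. \<forall>y\<in>sl2. \<phi> (lie_bracket x y) = lie_bracket (\<phi> x) (\<phi> y))"

definition COD_conjugate :: "(nat \<Rightarrow> ('a::field) mat2 set) \<Rightarrow> (nat \<Rightarrow> 'a mat2 set) \<Rightarrow> bool" where
  "COD_conjugate H H' \<longleftrightarrow> (\<exists>\<phi>. lie_automorphism \<phi>
      \<and> (\<forall>i\<le>2. \<exists>!j. j \<le> 2 \<and> \<phi> ` H i = H' j))"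

end

theory Submission
  imports Defs "HOL-Computational_Algebra.Polynomial"
begin

(* A classical Cartan subalgebra of sl_2(F) is abelian and self-normalizing, hence it is the
   centralizer F x of a nonzero x; a nonzero root l at x satisfies l^2 = -4 det x, so after
   rescaling x is an involution, x^2 = 1. In a COD the three spanning involutions are pairwise
   Killing-orthogonal, hence pairwise anticommuting; then uv commutes with w, so uv = t w, and
   (uv)^2 = -1 forces t^2 = -1. In F_q with q odd, -1 is a square iff q = 1 mod 4. Conversely,
   if i^2 = -1, the lines through the Pauli matrices diag(1,-1), [[0,1],[1,0]], [[0,-i],[i,0]]
   form a COD, and every anticommuting pair of involutions (u, v) is conjugate to the first two
   Pauli matrices by the basis (e, v e) with u e = e, which gives uniqueness. *)

lemmas mat2_simps = vec_eq_iff forall_2 sum_2 matrix_matrix_mult_def smul_def lie_bracket_def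
  trace_def mat_def

definition mat2_of :: "'a \<Rightarrow> 'a \<Rightarrow> 'a \<Rightarrow> 'a \<Rightarrow> 'a mat2" where
  "mat2_of a b c d = (\<chi> r s. if r = 1 then (if s = 1 then a else b) else (if s = 1 then c else d))"

lemma mat2_of_nth [simp]:
  "mat2_of a b c d $ 1 $ 1 = a" "mat2_of a b c d $ 1 $ 2 = b"
  "mat2_of a b c d $ 2 $ 1 = c" "mat2_of a b c d $ 2 $ 2 = d"
  by (simp_all add: mat2_of_def)

lemma smul_smul [simp]: "smul c (smul d x) = smul (c * d) x"
  by (simp add: mat2_simps)

lemma smul_one [simp]: "smul 1 x = x"
  by (simp add: mat2_simps)

lemma smul_zero [simp]: "smul 0 x = 0" "smul c 0 = 0"
  by (simp_all add: mat2_simps)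

lemma smul_eq_0_iff [simp]: "smul c x = 0 \<longleftrightarrow> c = 0 \<or> x = 0"
  by (auto simp add: mat2_simps)

lemma smul_add_right: "smul c (x + y) = smul c x + smul c y"
  by (simp add: mat2_simps algebra_simps)

lemma smul_add_left: "smul c x + smul d x = smul (c + d) x"
  by (simp add: mat2_simps algebra_simps)

lemma smul_diff_left: "smul c x - smul d x = smul (c - d) x"
  by (simp add: mat2_simps algebra_simps)

lemma smul_minus_left: "- smul c x = smul (- c) x"
  by (simp add: mat2_simps)

lemma smul_right_cancel: "x \<noteq> 0 \<Longrightarrow> smul c x = smul d x \<Longrightarrow> c = d"
  by (metis smul_diff_left smul_eq_0_iff right_minus_eq)

lemma smul_mat_one_cancel: "smul c (mat 1 :: 'a::field mat2) = smul d (mat 1) \<Longrightarrow> c = d"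
  by (simp add: mat2_simps)

lemma matrix_mul_smul_left: "smul c x ** y = smul c (x ** y)"
  by (simp add: mat2_simps algebra_simps sum_distrib_left)

lemma matrix_mul_smul_right: "x ** smul c y = smul c (x ** y)"
  by (simp add: mat2_simps algebra_simps)

lemma matrix_mul_minus_left: "(- A) ** B = - (A ** (B :: 'a::field mat2))"
  by (simp add: mat2_simps)

lemma matrix_mul_minus_right: "A ** (- B) = - (A ** (B :: 'a::field mat2))"
  by (simp add: mat2_simps)

lemma matrix_add_rdistrib: "(A + B) ** C = A ** C + B ** (C :: 'a::field mat2)"
  by (simp add: mat2_simps algebra_simps)

lemma trace_smul: "trace (smul c x) = c * trace x"
  by (simp add: mat2_simps algebra_simps)

lemma trace_zero [simp]: "trace (0 :: 'a::semiring_1^'n^'n) = 0"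
  by (simp add: trace_def)

lemma lie_bracket_smul_left: "lie_bracket (smul c x) y = smul c (lie_bracket x y)"
  by (simp add: mat2_simps algebra_simps)

lemma lie_bracket_smul_right: "lie_bracket x (smul c y) = smul c (lie_bracket x y)"
  by (simp add: mat2_simps algebra_simps)

lemma lie_bracket_add_left: "lie_bracket (x + z) y = lie_bracket x y + lie_bracket z y"
  by (simp add: mat2_simps algebra_simps)

lemma lie_bracket_self [simp]: "lie_bracket x x = 0"
  by (simp add: lie_bracket_def)

lemma lie_bracket_zero [simp]: "lie_bracket x 0 = 0" "lie_bracket 0 x = 0"
  by (simp_all add: lie_bracket_def)

lemma lie_bracket_antisym: "lie_bracket y x = - lie_bracket x y"
  by (simp add: lie_bracket_def)

lemma sl2_iff: "x \<in> sl2 \<longleftrightarrow> x $ 2 $ 2 = - x $ 1 $ 1"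
  by (simp add: sl2_def mat2_simps eq_commute[of "x$2$2"] neg_eq_iff_add_eq_0)

lemma sl2_add: "x \<in> sl2 \<Longrightarrow> y \<in> sl2 \<Longrightarrow> x + y \<in> sl2"
  by (simp add: sl2_def trace_add)

lemma sl2_smul: "x \<in> sl2 \<Longrightarrow> smul c x \<in> sl2"
  by (simp add: sl2_def trace_smul)

lemma zero_in_sl2: "0 \<in> sl2"
  by (simp add: sl2_iff)

lemma sl2_square: "x \<in> sl2 \<Longrightarrow> x ** x = smul (- det x) (mat 1)"
  by (simp add: mat2_simps sl2_iff det_2 algebra_simps)

lemma sl2_anticommutator:
  "x \<in> sl2 \<Longrightarrow> y \<in> sl2 \<Longrightarrow> x ** y + y ** x = smul (trace (x ** y)) (mat 1)"
  by (simp add: mat2_simps sl2_iff algebra_simps)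

lemma sl2_ad_cube:
  "x \<in> sl2 \<Longrightarrow> lie_bracket (lie_bracket (lie_bracket y x) x) x
     = smul (- 4 * det x) (lie_bracket y x)"
  by (simp add: mat2_simps sl2_iff det_2 algebra_simps)

lemma numerals_nonzero_if_CHAR_gt_3:
  assumes "CHAR('a::field) > 3"
  shows "(2::'a) \<noteq> 0" "(3::'a) \<noteq> 0" "(4::'a) \<noteq> 0"
proof -
  have "of_nat n \<noteq> (0::'a)" if "0 < n" "n \<le> 3" for n
    using assms that by (auto simp: of_nat_eq_0_iff_char_dvd dest: dvd_imp_le)
  from this[of 2] this[of 3] show "(2::'a) \<noteq> 0" "(3::'a) \<noteq> 0"
    by simp_all
  then show "(4::'a) \<noteq> 0"
    by (metis mult_2 mult_eq_0_iff numeral_Bit0 one_add_one)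
qed

lemma killing_smul: "killing (smul a x) (smul b y) = 4 * a * b * trace (x ** y)"
  by (simp add: killing_def matrix_mul_smul_left matrix_mul_smul_right trace_smul)

lemma trace_orthogonal_anticommute:
  assumes "x \<in> sl2" "y \<in> sl2" "trace (x ** y) = 0"
  shows "x ** y = - (y ** x)"
  using sl2_anticommutator[OF assms(1,2)] assms(3) by (simp add: eq_neg_iff_add_eq_0)

lemma trace_linear_combination_mul:
  "trace ((smul a x + smul b y + smul c z) ** w)
    = a * trace (x ** w) + b * trace (y ** w) + c * trace (z ** (w :: 'a::field mat2))"
  by (simp add: matrix_add_rdistrib matrix_mul_smul_left trace_add trace_smul)

lemma hyperbolic_triple_independent:
  fixes x e f :: "'a::field mat2"
  assumes "trace (x ** x) \<noteq> 0" "trace (e ** f) \<noteq> 0" "trace (e ** e) = 0" "trace (f ** f) = 0"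
    "trace (x ** e) = 0" "trace (x ** f) = 0"
    and "smul a x + smul b e + smul c f = 0"
  shows "a = 0 \<and> b = 0 \<and> c = 0"
proof -
  have zero: "a * trace (x ** w) + b * trace (e ** w) + c * trace (f ** w) = 0" for w
    unfolding trace_linear_combination_mul[symmetric] assms(7) by simp
  have "trace (e ** x) = 0" "trace (f ** x) = 0" "trace (f ** e) = trace (e ** f)"
    using assms(5,6) trace_mul_sym by metis+
  then have "a * trace (x ** x) = 0" "c * trace (e ** f) = 0" "b * trace (e ** f) = 0"
    using zero[of x] zero[of e] zero[of f] assms(3-6) by simp_all
  then show ?thesis
    using assms(1,2) by simp
qed

lemma orthogonal_triple_independent:
  fixes x y z :: "'a::field mat2"
  assumes "trace (x ** x) \<noteq> 0" "trace (y ** y) \<noteq> 0" "trace (z ** z) \<noteq> 0"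
    "trace (x ** y) = 0" "trace (x ** z) = 0" "trace (y ** z) = 0"
    and "smul a x + smul b y + smul c z = 0"
  shows "a = 0 \<and> b = 0 \<and> c = 0"
proof -
  have zero: "a * trace (x ** w) + b * trace (y ** w) + c * trace (z ** w) = 0" for w
    unfolding trace_linear_combination_mul[symmetric] assms(7) by simp
  have "trace (y ** x) = 0" "trace (z ** x) = 0" "trace (z ** y) = 0"
    using assms(4-6) trace_mul_sym by metis+
  then have "a * trace (x ** x) = 0" "b * trace (y ** y) = 0" "c * trace (z ** z) = 0"
    using zero[of x] zero[of y] zero[of z] assms(4-6) by simp_all
  then show ?thesis
    using assms(1-3) by simp
qed

definition line :: "'a::field mat2 \<Rightarrow> 'a mat2 set" where
  "line x = {smul c x | c. True}"

lemma line_zero: "line 0 = {0}"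
  by (simp add: line_def)

lemma smul_in_line: "smul c x \<in> line x"
  unfolding line_def by blast

lemma in_line_self: "x \<in> line x"
  using smul_in_line[of 1 x] by simp

lemma zero_in_line: "0 \<in> line x"
  using smul_in_line[of 0 x] by simp

lemma in_lineE: "y \<in> line x \<Longrightarrow> (\<And>c. y = smul c x \<Longrightarrow> P) \<Longrightarrow> P"
  unfolding line_def by blast

lemma line_subset_sl2: "x \<in> sl2 \<Longrightarrow> line x \<subseteq> sl2"
  by (auto simp: line_def intro: sl2_smul)

lemma lin_subspace_line: "lin_subspace (line x)"
  unfolding lin_subspace_def line_def by (auto simp: smul_add_left)

lemma line_smul:
  assumes "c \<noteq> 0"
  shows "line (smul c x) = line x"
proof
  show "line (smul c x) \<subseteq> line x"
    by (auto simp: line_def)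
  show "line x \<subseteq> line (smul c x)"
  proof
    fix y assume "y \<in> line x"
    then obtain d where "y = smul d x"
      by (rule in_lineE)
    then have "y = smul (d / c) (smul c x)"
      using assms by simp
    then show "y \<in> line (smul c x)"
      by (metis smul_in_line)
  qed
qed

lemma lspan_lin_subspace: "lin_subspace S \<Longrightarrow> lspan S = S"
  unfolding lspan_def by auto

lemma sl2_not_subset_line: "\<not> sl2 \<subseteq> line (x :: 'a::field mat2)"
proof
  assume "sl2 \<subseteq> line x"
  moreover have "mat2_of 0 1 0 0 \<in> sl2" "mat2_of 0 0 1 0 \<in> (sl2 :: 'a mat2 set)"
    by (simp_all add: sl2_iff)
  ultimately have "mat2_of 0 1 0 0 \<in> line x" "mat2_of 0 0 1 0 \<in> line x"
    by auto
  then obtain c d where "mat2_of 0 1 0 0 = smul c x" "mat2_of 0 0 1 0 = smul d x"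
    by (meson in_lineE)
  then have "c * x$1$2 = 1" "c * x$2$1 = 0" "d * x$2$1 = 1"
    by (simp_all add: vec_eq_iff forall_2 smul_def)
  then show False
    by (metis mult_eq_0_iff zero_neq_one)
qed

lemma line_eq_zero_iff: "line z = {0} \<longleftrightarrow> z = 0"
  using in_line_self[of z] by (auto simp: line_zero)

lemma lie_bracket_in_line_eq_zero: "p \<in> line x \<Longrightarrow> q \<in> line x \<Longrightarrow> lie_bracket p q = 0"
  by (auto elim!: in_lineE simp: lie_bracket_smul_left lie_bracket_smul_right)

text \<open>Commuting with x makes the entry vectors (y11, y12, y21) and (x11, x12, x21)
  proportional.\<close>

lemma sl2_centralizer:
  fixes x y :: "'a::field mat2"
  assumes two: "(2::'a) \<noteq> 0" and x: "x \<in> sl2" "x \<noteq> 0" and y: "y \<in> sl2"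
    and comm: "lie_bracket y x = 0"
  shows "y \<in> line x"
proof -
  have x22: "x$2$2 = - x$1$1" and y22: "y$2$2 = - y$1$1"
    using x y by (simp_all add: sl2_iff)
  have "(lie_bracket y x) $ i $ j = 0" for i j
    using comm by simp
  from this[of 1 1] this[of 1 2] this[of 2 1]
  have e1: "y$1$2 * x$2$1 = x$1$2 * y$2$1"
    and "2 * (y$1$1 * x$1$2 - x$1$1 * y$1$2) = 0" "2 * (y$2$1 * x$1$1 - x$2$1 * y$1$1) = 0"
    by (simp_all add: lie_bracket_def matrix_matrix_mult_def sum_2 x22 y22 algebra_simps)
  then have e2: "y$1$1 * x$1$2 = x$1$1 * y$1$2" and e3: "y$2$1 * x$1$1 = x$2$1 * y$1$1"
    using two by simp_all
  have "x$1$1 \<noteq> 0 \<or> x$1$2 \<noteq> 0 \<or> x$2$1 \<noteq> 0"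
    using x by (auto simp: mat2_simps sl2_iff)
  then obtain c where "y = smul c x"
  proof (elim disjE)
    assume "x$1$1 \<noteq> 0"
    then show ?thesis
      by (intro that[of "y$1$1 / x$1$1"]) (use x22 y22 e1 e2 e3 in \<open>simp add: mat2_simps field_simps\<close>)
  next
    assume "x$1$2 \<noteq> 0"
    then show ?thesis
      by (intro that[of "y$1$2 / x$1$2"]) (use x22 y22 e1 e2 e3 in \<open>simp add: mat2_simps field_simps\<close>)
  next
    assume "x$2$1 \<noteq> 0"
    then show ?thesis
      by (intro that[of "y$2$1 / x$2$1"]) (use x22 y22 e1 e2 e3 in \<open>simp add: mat2_simps field_simps\<close>)
  qed
  then show ?thesis
    by (simp add: smul_in_line)
qed

lemma brackets_of_lines:
  assumes "lie_bracket e f = smul m x" "m \<noteq> 0"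
  shows "{lie_bracket p q | p q. p \<in> line e \<and> q \<in> line f} = line x"
proof (intro set_eqI iffI)
  fix z assume "z \<in> {lie_bracket p q | p q. p \<in> line e \<and> q \<in> line f}"
  then obtain b c where "z = lie_bracket (smul b e) (smul c f)"
    by (auto elim!: in_lineE)
  then have "z = smul (b * c * m) x"
    using assms by (simp add: lie_bracket_smul_left lie_bracket_smul_right ac_simps)
  then show "z \<in> line x"
    by (simp add: smul_in_line)
next
  fix z assume "z \<in> line x"
  then obtain d where "z = smul d x"
    by (rule in_lineE)
  then have "z = lie_bracket (smul (d / m) e) f"
    using assms by (simp add: lie_bracket_smul_left)
  then show "z \<in> {lie_bracket p q | p q. p \<in> line e \<and> q \<in> line f}"
    using smul_in_line in_line_self by blast
qed

lemma sum_atMost_2: "(\<Sum>j\<le>(2::nat). h j) = h 0 + h 1 + (h 2 :: 'b::comm_monoid_add)"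
  by (simp add: numeral_2_eq_2 atMost_Suc add_ac)

lemma direct_sum_of_lines:
  fixes x y z :: "'a::field mat2" and H :: "nat \<Rightarrow> 'a mat2 set"
  assumes H: "H 0 = line x" "H 1 = line y" "H 2 = line z"
    and spanning: "\<forall>w\<in>sl2. \<exists>a b c. w = smul a x + smul b y + smul c z"
    and independent: "\<forall>a b c. smul a x + smul b y + smul c z = 0 \<longrightarrow> a = 0 \<and> b = 0 \<and> c = 0"
    and "w \<in> sl2"
  shows "\<exists>!h. (\<forall>i\<le>2. h i \<in> H i) \<and> (\<forall>i>2. h i = 0) \<and> w = (\<Sum>i\<le>2. h i)"
proof -
  obtain a b c where w: "w = smul a x + smul b y + smul c z"
    using spanning assms(6) by blast
  define h where "h n = (if n = 0 then smul a x else if n = 1 then smul b y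
    else if n = 2 then smul c z else 0)" for n :: nat
  show ?thesis
  proof (rule ex1I[of _ h], intro conjI allI impI)
    fix n :: nat assume "n \<le> 2"
    then have "n = 0 \<or> n = 1 \<or> n = 2"
      by auto
    then show "h n \<in> H n"
      using H by (auto simp: h_def smul_in_line)
  next
    show "w = (\<Sum>i\<le>2. h i)"
      using w by (simp add: sum_atMost_2 h_def)
  next
    fix h' assume h': "(\<forall>i\<le>2. h' i \<in> H i) \<and> (\<forall>i>2. h' i = 0) \<and> w = (\<Sum>i\<le>2. h' i)"
    then have "h' 0 \<in> line x" "h' 1 \<in> line y" "h' 2 \<in> line z"
      using H by auto
    then obtain a' b' c' where h'_lines: "h' 0 = smul a' x" "h' 1 = smul b' y" "h' 2 = smul c' z"
      by (meson in_lineE)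
    have "smul (a - a') x + smul (b - b') y + smul (c - c') z
        = (smul a x + smul b y + smul c z) - (smul a' x + smul b' y + smul c' z)"
      by (simp add: mat2_simps algebra_simps)
    also have "\<dots> = 0"
      using h' h'_lines w by (simp add: sum_atMost_2)
    finally have "a = a' \<and> b = b' \<and> c = c'"
      using independent by (metis right_minus_eq)
    show "h' = h"
    proof
      fix n
      show "h' n = h n"
        using h' h'_lines \<open>a = a' \<and> b = b' \<and> c = c'\<close>
        by (cases "n \<le> 2") (auto simp: h_def le_Suc_eq numeral_2_eq_2)
    qed
  qed (simp add: h_def)
qed

definition line_functional :: "'a::field mat2 \<Rightarrow> 'a \<Rightarrow> 'a mat2 \<Rightarrow> 'a" where
  "line_functional x t h = (if h \<in> line x then (THE c. h = smul c x) * t else 0)"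

definition ad_eigenspace :: "'a::field mat2 \<Rightarrow> 'a \<Rightarrow> 'a mat2 set" where
  "ad_eigenspace x t = {y \<in> sl2. lie_bracket y x = smul t y}"

lemma line_functional_smul:
  assumes "x \<noteq> 0"
  shows "line_functional x t (smul c x) = c * t"
proof -
  have "(THE d. smul c x = smul d x) = c"
    using assms by (auto intro: the_equality dest: smul_right_cancel)
  then show ?thesis
    by (simp add: line_functional_def smul_in_line)
qed

lemma line_functional_self: "x \<noteq> 0 \<Longrightarrow> line_functional x t x = t"
  using line_functional_smul[of x t 1] by simp

lemma line_functional_inject: "x \<noteq> 0 \<Longrightarrow> line_functional x s = line_functional x t \<longleftrightarrow> s = t"
  by (metis line_functional_self)

lemma line_functional_zero: "line_functional x 0 = (\<lambda>_. 0)"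
  by (simp add: line_functional_def fun_eq_iff)

lemma line_functional_uminus: "(\<lambda>h. - line_functional x t h) = line_functional x (- t)"
  by (simp add: line_functional_def fun_eq_iff)

lemma line_functional_add_mult:
  "(\<lambda>h. line_functional x s h + k * line_functional x t h) = line_functional x (s + k * t)"
  by (simp add: line_functional_def fun_eq_iff algebra_simps)

lemma functional_on_line_functional:
  assumes "x \<noteq> 0"
  shows "functional_on (line x) (line_functional x t)"
  unfolding functional_on_def
proof (intro conjI ballI allI impI)
  fix h k assume "h \<in> line x" "k \<in> line x"
  then obtain a b where "h = smul a x" "k = smul b x"
    by (meson in_lineE)
  then show "line_functional x t (h + k) = line_functional x t h + line_functional x t k"
    using assms by (simp add: smul_add_left line_functional_smul distrib_right)
next
  fix c h assume "h \<in> line x"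
  then obtain a where "h = smul a x"
    by (rule in_lineE)
  then show "line_functional x t (smul c h) = c * line_functional x t h"
    using assms by (simp add: line_functional_smul)
qed (simp add: line_functional_def)

lemma functional_on_line_eq:
  assumes "x \<noteq> 0" "functional_on (line x) \<alpha>"
  shows "\<alpha> = line_functional x (\<alpha> x)"
proof
  fix h
  show "\<alpha> h = line_functional x (\<alpha> x) h"
  proof (cases "h \<in> line x")
    case True
    then obtain c where "h = smul c x"
      by (rule in_lineE)
    then show ?thesis
      using assms in_line_self[of x] by (simp add: functional_on_def line_functional_smul)
  next
    case False
    then show ?thesis
      using assms by (simp add: functional_on_def line_functional_def)
  qed
qed

lemma root_space_line:
  assumes "x \<noteq> 0"
  shows "root_space (line x) (line_functional x t) = ad_eigenspace x t"
proof (intro set_eqI iffI)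
  fix y assume "y \<in> root_space (line x) (line_functional x t)"
  then show "y \<in> ad_eigenspace x t"
    using assms in_line_self[of x]
    by (simp add: root_space_def ad_eigenspace_def line_functional_self)
next
  fix y assume y: "y \<in> ad_eigenspace x t"
  have "lie_bracket y h = smul (line_functional x t h) y" if h: "h \<in> line x" for h
  proof -
    obtain c where "h = smul c x"
      using h by (rule in_lineE)
    then show ?thesis
      using y assms by (simp add: ad_eigenspace_def line_functional_smul lie_bracket_smul_right)
  qed
  then show "y \<in> root_space (line x) (line_functional x t)"
    using y by (simp add: root_space_def ad_eigenspace_def)
qed

lemma roots_line:
  assumes "x \<noteq> 0"
  shows "roots (line x) = line_functional x ` {t. ad_eigenspace x t \<noteq> {0}}"
proof (intro set_eqI iffI)
  fix \<alpha> assume "\<alpha> \<in> roots (line x)"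
  then have functional: "functional_on (line x) \<alpha>"
    and nontrivial: "root_space (line x) \<alpha> \<noteq> {0}"
    by (simp_all add: roots_def)
  have \<alpha>: "\<alpha> = line_functional x (\<alpha> x)"
    using functional_on_line_eq[OF assms functional] .
  then have "ad_eigenspace x (\<alpha> x) \<noteq> {0}"
    using nontrivial root_space_line[OF assms, of "\<alpha> x"] by metis
  with \<alpha> show "\<alpha> \<in> line_functional x ` {t. ad_eigenspace x t \<noteq> {0}}"
    by blast
next
  fix \<alpha> assume "\<alpha> \<in> line_functional x ` {t. ad_eigenspace x t \<noteq> {0}}"
  then obtain t where "\<alpha> = line_functional x t" "ad_eigenspace x t \<noteq> {0}"
    by blast
  then show "\<alpha> \<in> roots (line x)"
    using assms by (simp add: roots_def functional_on_line_functional root_space_line)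
qed

lemma zero_in_ad_eigenspace: "0 \<in> ad_eigenspace x t"
  by (simp add: ad_eigenspace_def zero_in_sl2)

lemma ad_eigenspace_zero_subset_line:
  fixes x :: "'a::field mat2"
  assumes "(2::'a) \<noteq> 0" "x \<in> sl2" "x \<noteq> 0"
  shows "ad_eigenspace x 0 \<subseteq> line x"
  using sl2_centralizer[OF assms] by (auto simp: ad_eigenspace_def)

lemma ad_eigenvalue_square:
  assumes "x \<in> sl2" "y \<in> ad_eigenspace x t" "y \<noteq> 0" "t \<noteq> 0"
  shows "t * t = - 4 * det x"
proof -
  have "lie_bracket y x = smul t y"
    using assms(2) by (simp add: ad_eigenspace_def)
  then have "smul (t * t * t) y = smul (- 4 * det x * t) y"
    using sl2_ad_cube[OF assms(1), of y] by (simp add: lie_bracket_smul_left ac_simps)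
  then have "(t * t) * t = (- 4 * det x) * t"
    using assms(3) smul_right_cancel by metis
  then show ?thesis
    using assms(4) mult_right_cancel by blast
qed

section \<open>Classical Cartan subalgebras are lines through involutions\<close>

lemma cartan_abelian_is_line:
  fixes H :: "'a::field mat2 set"
  assumes two: "(2::'a) \<noteq> 0" and "cartan H" "abelian H"
  shows "\<exists>x. x \<in> sl2 \<and> x \<noteq> 0 \<and> H = line x"
proof -
  have lin: "lin_subspace H" and sub: "H \<subseteq> sl2" and self_normalizing: "normalizer H = H"
    using assms(2) by (auto simp: cartan_def subalgebra_def)
  have "0 \<in> H"
    using lin by (simp add: lin_subspace_def)
  have "H \<noteq> {0}"
  proof
    assume "H = {0}"
    then have "sl2 \<subseteq> normalizer H"
      by (auto simp: normalizer_def)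
    then have "sl2 \<subseteq> (line 0 :: 'a mat2 set)"
      using self_normalizing \<open>H = {0}\<close> by (simp add: line_zero)
    then show False
      using sl2_not_subset_line by blast
  qed
  with \<open>0 \<in> H\<close> obtain x where x: "x \<in> H" "x \<noteq> 0"
    by blast
  have "H = line x"
  proof
    show "H \<subseteq> line x"
    proof
      fix y assume "y \<in> H"
      then have "lie_bracket y x = 0"
        using assms(3) x(1) by (simp add: abelian_def)
      then show "y \<in> line x"
        using sl2_centralizer[OF two] x sub \<open>y \<in> H\<close> by blast
    qed
    show "line x \<subseteq> H"
      using lin x by (auto simp: lin_subspace_def line_def)
  qed
  with x sub show ?thesis
    by blast
qed

lemma classical_cartan_line_has_nonzero_eigenvalue:
  fixes x :: "'a::{finite,field} mat2"
  assumes two: "(2::'a) \<noteq> 0" and x: "x \<in> sl2" "x \<noteq> 0" and cc: "classical_cartan (line x)"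
  shows "\<exists>t y. t \<noteq> 0 \<and> y \<noteq> 0 \<and> y \<in> ad_eigenspace x t"
proof (rule ccontr)
  assume "\<not> ?thesis"
  then have "{t. ad_eigenspace x t \<noteq> {0}} \<subseteq> {0}"
    using zero_in_ad_eigenspace by blast
  then have roots: "roots (line x) \<subseteq> {line_functional x 0}"
    unfolding roots_line[OF x(2)] by (metis image_empty image_insert image_mono)
  have "z \<in> line x" if "z \<in> sl2" for z
  proof -
    obtain f where f: "\<forall>\<alpha>\<in>roots (line x). f \<alpha> \<in> root_space (line x) \<alpha>"
      and z: "z = (\<Sum>\<alpha>\<in>roots (line x). f \<alpha>)"
      using cc \<open>z \<in> sl2\<close> unfolding classical_cartan_def by blast
    have "root_space (line x) (line_functional x 0) \<subseteq> line x"
      using ad_eigenspace_zero_subset_line[OF two x] root_space_line[OF x(2)] by simp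
    moreover have "roots (line x) = {} \<or> roots (line x) = {line_functional x 0}"
      using roots by blast
    ultimately show ?thesis
      using f z zero_in_line by (elim disjE) auto
  qed
  then show False
    using sl2_not_subset_line by blast
qed

lemma classical_cartan_is_involution_line:
  fixes H :: "'a::{finite,field} mat2 set"
  assumes ch: "CHAR('a) > 3" and cc: "classical_cartan H"
  shows "\<exists>u. u \<in> sl2 \<and> u ** u = mat 1 \<and> H = line u"
proof -
  note numerals = numerals_nonzero_if_CHAR_gt_3[OF ch]
  have "cartan H" "abelian H"
    using cc by (simp_all add: classical_cartan_def)
  then obtain x where x: "x \<in> sl2" "x \<noteq> 0" and H: "H = line x"
    using cartan_abelian_is_line[OF numerals(1)] by blast
  then obtain t y where "t \<noteq> 0" "y \<noteq> 0" "y \<in> ad_eigenspace x t"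
    using classical_cartan_line_has_nonzero_eigenvalue[OF numerals(1)] cc by blast
  then have t: "t \<noteq> 0" "t * t = - 4 * det x"
    using ad_eigenvalue_square x(1) by blast+
  define u where "u = smul (2 / t) x"
  have "(2 / t) * (2 / t) * - det x = (- 4 * det x) / (t * t)"
    using t by (simp add: field_simps)
  also have "\<dots> = 1"
    unfolding t(2)[symmetric] using t(1) by simp
  finally have "(2 / t) * (2 / t) * - det x = 1" .
  then have "u ** u = mat 1"
    using sl2_square[OF x(1)] by (simp add: u_def matrix_mul_smul_left matrix_mul_smul_right)
  moreover have "u \<in> sl2" "H = line u"
    using x H t numerals by (simp_all add: u_def sl2_smul line_smul)
  ultimately show ?thesis
    by blast
qed

section \<open>A sufficient condition for a line to be a classical Cartan subalgebra\<close>

lemma root_string_leaves_roots: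
  fixes l a b :: "'a::field"
  assumes "(2::'a) \<noteq> 0" "(3::'a) \<noteq> 0" "l \<noteq> 0" "a \<in> {0, l, - l}" "b \<in> {l, - l}"
  shows "\<exists>k\<in>{1, 2, 3}. a + of_nat k * b \<notin> {0, l, - l}"
proof -
  have "b \<noteq> 0"
    using assms(3,5) by auto
  have "2 * b \<noteq> b"
  proof
    assume "2 * b = b"
    then have "b + b = b + 0"
      by (simp only: mult_2 add_0_right)
    with \<open>b \<noteq> 0\<close> show False
      by (simp only: add_left_cancel)
  qed
  moreover have "2 * b \<noteq> - b"
  proof
    assume "2 * b = - b"
    then have "3 * b = 0"
      by algebra
    with \<open>b \<noteq> 0\<close> assms(2) show False
      by simp
  qed
  ultimately have "2 * b \<notin> {0, b, - b}"
    using \<open>b \<noteq> 0\<close> assms(1) by auto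
  moreover have "{0, l, - l} = {0, b, - b}"
    using assms(5) by auto
  moreover have "\<exists>k\<in>{1, 2, 3}. a + of_nat k * b = 2 * b"
  proof -
    have "a = 0 \<or> a = b \<or> a = - b"
      using assms(4,5) by auto
    moreover have "0 + of_nat 2 * b = 2 * b" "b + of_nat 1 * b = 2 * b" "- b + of_nat 3 * b = 2 * b"
      unfolding of_nat_numeral of_nat_1 by algebra+
    ultimately show ?thesis
      by blast
  qed
  ultimately show ?thesis
    by metis
qed

locale cartan_triple =
  fixes x e f :: "'a::{finite,field} mat2" and l m :: 'a
  assumes CHAR_gt_3: "CHAR('a) > 3"
    and in_sl2: "x \<in> sl2" "e \<in> sl2" "f \<in> sl2"
    and bracket_e: "lie_bracket e x = smul l e"
    and bracket_f: "lie_bracket f x = smul (- l) f"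
    and bracket_ef: "lie_bracket e f = smul m x"
    and l_nonzero: "l \<noteq> 0" and m_nonzero: "m \<noteq> 0"
    and spanning: "\<forall>y\<in>sl2. \<exists>a b c. y = smul a x + smul b e + smul c f"
    and independent: "\<forall>a b c. smul a x + smul b e + smul c f = 0 \<longrightarrow> a = 0 \<and> b = 0 \<and> c = 0"
begin

lemma coordinates_unique:
  assumes "smul a x + smul b e + smul c f = smul a' x + smul b' e + smul c' f"
  shows "a = a' \<and> b = b' \<and> c = c'"
proof -
  have "smul (a - a') x + smul (b - b') e + smul (c - c') f = 0"
    using assms by (simp add: mat2_simps algebra_simps)
  then show ?thesis
    using independent by fastforce
qed

lemma coordinates_eq_iff:
  "smul a x + smul b e + smul c f = smul a' x + smul b' e + smul c' f \<longleftrightarrow> a = a' \<and> b = b' \<and> c = c'"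
  by (metis coordinates_unique)

lemma nonzero: "x \<noteq> 0" "e \<noteq> 0" "f \<noteq> 0"
  using independent[rule_format, of 1 0 0] independent[rule_format, of 0 1 0]
    independent[rule_format, of 0 0 1] by auto

lemma numerals_nonzero: "(2::'a) \<noteq> 0" "(3::'a) \<noteq> 0"
  using numerals_nonzero_if_CHAR_gt_3[OF CHAR_gt_3] by simp_all

lemma l_neq_uminus_l: "l \<noteq> - l"
  using numerals_nonzero l_nonzero by (auto simp: eq_neg_iff_add_eq_0 simp flip: mult_2)

lemma coordinates_in_sl2: "smul a x + smul b e + smul c f \<in> sl2"
  using in_sl2 by (intro sl2_add sl2_smul)

lemma bracket_coordinates:
  "lie_bracket (smul a x + smul b e + smul c f) x = smul 0 x + smul (l * b) e + smul (- l * c) f"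
  using bracket_e bracket_f by (simp add: lie_bracket_add_left lie_bracket_smul_left ac_simps)

lemma bracket_coordinates_eq_smul_iff:
  "lie_bracket (smul a x + smul b e + smul c f) x = smul t (smul a x + smul b e + smul c f)
    \<longleftrightarrow> (t = 0 \<or> a = 0) \<and> (t = l \<or> b = 0) \<and> (t = - l \<or> c = 0)"
proof -
  have scaled: "smul t (smul a x + smul b e + smul c f)
      = smul (t * a) x + smul (t * b) e + smul (t * c) f"
    by (simp add: smul_add_right)
  have "- l * c = t * c \<longleftrightarrow> t = - l \<or> c = 0"
    by (metis minus_mult_left mult_cancel_right)
  then have "(0 = t * a \<and> l * b = t * b \<and> - l * c = t * c)
      \<longleftrightarrow> (t = 0 \<or> a = 0) \<and> (t = l \<or> b = 0) \<and> (t = - l \<or> c = 0)"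
    by (auto simp: mult_cancel_right)
  then show ?thesis
    unfolding bracket_coordinates scaled coordinates_eq_iff .
qed

lemma mem_ad_eigenspace_iff:
  "y \<in> ad_eigenspace x t \<longleftrightarrow> (\<exists>a b c. y = smul a x + smul b e + smul c f
    \<and> (t = 0 \<or> a = 0) \<and> (t = l \<or> b = 0) \<and> (t = - l \<or> c = 0))"
proof
  assume "y \<in> ad_eigenspace x t"
  then have "y \<in> sl2" and y_eigen: "lie_bracket y x = smul t y"
    by (simp_all add: ad_eigenspace_def)
  then obtain a b c where y: "y = smul a x + smul b e + smul c f"
    using spanning by blast
  have "(t = 0 \<or> a = 0) \<and> (t = l \<or> b = 0) \<and> (t = - l \<or> c = 0)"
    using y_eigen unfolding y bracket_coordinates_eq_smul_iff .
  with y show "\<exists>a b c. y = smul a x + smul b e + smul c f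
      \<and> (t = 0 \<or> a = 0) \<and> (t = l \<or> b = 0) \<and> (t = - l \<or> c = 0)"
    by blast
next
  assume "\<exists>a b c. y = smul a x + smul b e + smul c f
      \<and> (t = 0 \<or> a = 0) \<and> (t = l \<or> b = 0) \<and> (t = - l \<or> c = 0)"
  then obtain a b c where y: "y = smul a x + smul b e + smul c f"
    and coordinates: "(t = 0 \<or> a = 0) \<and> (t = l \<or> b = 0) \<and> (t = - l \<or> c = 0)"
    by blast
  have "lie_bracket y x = smul t y"
    unfolding y bracket_coordinates_eq_smul_iff by (rule coordinates)
  then show "y \<in> ad_eigenspace x t"
    using coordinates_in_sl2 by (simp add: ad_eigenspace_def y)
qed

lemma ad_eigenspace_eq:
  "ad_eigenspace x t = line (if t = 0 then x else if t = l then e else if t = - l then f else 0)"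
proof -
  consider "t = 0" | "t = l" | "t = - l" | "t \<noteq> 0" "t \<noteq> l" "t \<noteq> - l"
    by blast
  then show ?thesis
  proof cases
    case 1
    show ?thesis
      unfolding set_eq_iff mem_ad_eigenspace_iff line_def using 1 l_nonzero by simp
  next
    case 2
    show ?thesis
      unfolding set_eq_iff mem_ad_eigenspace_iff line_def using 2 l_nonzero l_neq_uminus_l by simp
  next
    case 3
    show ?thesis
      unfolding set_eq_iff mem_ad_eigenspace_iff line_def using 3 l_nonzero l_neq_uminus_l by simp
  next
    case 4
    show ?thesis
      unfolding set_eq_iff mem_ad_eigenspace_iff line_def using 4 by simp
  qed
qed

lemma roots_eq: "roots (line x) = {line_functional x 0, line_functional x l, line_functional x (- l)}"
proof -
  have "{t. ad_eigenspace x t \<noteq> {0}} = {0, l, - l}"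
    using nonzero by (auto simp: ad_eigenspace_eq line_eq_zero_iff)
  then show ?thesis
    by (simp add: roots_line[OF nonzero(1)])
qed

lemma roots_distinct:
  "line_functional x 0 \<noteq> line_functional x l" "line_functional x 0 \<noteq> line_functional x (- l)"
  "line_functional x l \<noteq> line_functional x (- l)"
  using l_nonzero l_neq_uminus_l by (simp_all add: line_functional_inject[OF nonzero(1)])

lemma root_spaces:
  "root_space (line x) (line_functional x 0) = line x"
  "root_space (line x) (line_functional x l) = line e"
  "root_space (line x) (line_functional x (- l)) = line f"
  using roots_distinct l_nonzero
  by (simp_all add: root_space_line[OF nonzero(1)] ad_eigenspace_eq line_functional_inject[OF nonzero(1)])

lemma root_space_decomposition:
  assumes "y \<in> sl2"
  shows "\<exists>!F. (\<forall>\<alpha>. \<alpha> \<notin> roots (line x) \<longrightarrow> F \<alpha> = 0)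
    \<and> (\<forall>\<alpha>\<in>roots (line x). F \<alpha> \<in> root_space (line x) \<alpha>) \<and> y = (\<Sum>\<alpha>\<in>roots (line x). F \<alpha>)"
proof -
  obtain a b c where y: "y = smul a x + smul b e + smul c f"
    using spanning assms by blast
  define F where "F \<alpha> = (if \<alpha> = line_functional x 0 then smul a x
      else if \<alpha> = line_functional x l then smul b e
      else if \<alpha> = line_functional x (- l) then smul c f else 0)" for \<alpha>
  have sum_roots: "(\<Sum>\<alpha>\<in>roots (line x). G \<alpha>)
      = G (line_functional x 0) + G (line_functional x l) + G (line_functional x (- l))" for G
    using roots_distinct by (simp add: roots_eq add.assoc)
  show ?thesis
  proof (rule ex1I[of _ F], intro conjI)
    show "\<forall>\<alpha>. \<alpha> \<notin> roots (line x) \<longrightarrow> F \<alpha> = 0"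
      by (simp add: F_def roots_eq)
    show "\<forall>\<alpha>\<in>roots (line x). F \<alpha> \<in> root_space (line x) \<alpha>"
      using roots_distinct by (auto simp: F_def roots_eq root_spaces smul_in_line)
    show "y = (\<Sum>\<alpha>\<in>roots (line x). F \<alpha>)"
      using roots_distinct y by (simp add: sum_roots F_def)
  next
    fix G
    assume G: "(\<forall>\<alpha>. \<alpha> \<notin> roots (line x) \<longrightarrow> G \<alpha> = 0)
      \<and> (\<forall>\<alpha>\<in>roots (line x). G \<alpha> \<in> root_space (line x) \<alpha>) \<and> y = (\<Sum>\<alpha>\<in>roots (line x). G \<alpha>)"
    then have "G (line_functional x 0) \<in> line x" "G (line_functional x l) \<in> line e"
      "G (line_functional x (- l)) \<in> line f"
      by (simp_all add: roots_eq root_spaces)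
    then obtain a' b' c' where G_roots: "G (line_functional x 0) = smul a' x"
      "G (line_functional x l) = smul b' e" "G (line_functional x (- l)) = smul c' f"
      by (meson in_lineE)
    then have "smul a x + smul b e + smul c f = smul a' x + smul b' e + smul c' f"
      using G y by (simp add: sum_roots)
    then have "a = a' \<and> b = b' \<and> c = c'"
      by (rule coordinates_unique)
    show "G = F"
    proof
      fix \<alpha>
      show "G \<alpha> = F \<alpha>"
        using G G_roots roots_distinct \<open>a = a' \<and> b = b' \<and> c = c'\<close>
        unfolding F_def roots_eq by auto
    qed
  qed
qed

lemma root_brackets_one_dimensional:
  assumes "\<alpha> \<in> roots (line x)" "\<alpha> \<noteq> (\<lambda>_. 0)"
  shows "one_dimensional (lspan {lie_bracket p q | p q. p \<in> root_space (line x) \<alpha>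
                                  \<and> q \<in> root_space (line x) (\<lambda>h. - \<alpha> h)})"
proof -
  have "one_dimensional (line x)"
    using nonzero(1) by (auto simp: one_dimensional_def line_def)
  moreover have "lie_bracket f e = smul (- m) x"
    using bracket_ef lie_bracket_antisym[of f e] by (simp add: smul_minus_left)
  moreover have "\<alpha> = line_functional x l \<or> \<alpha> = line_functional x (- l)"
    using assms by (auto simp: roots_eq line_functional_zero)
  ultimately show ?thesis
    using brackets_of_lines[OF bracket_ef m_nonzero] brackets_of_lines[of f e "- m" x] m_nonzero
    by (auto simp: line_functional_uminus root_spaces lspan_lin_subspace[OF lin_subspace_line])
qed

lemma root_strings_leave_roots:
  assumes "\<alpha> \<in> roots (line x)" "\<beta> \<in> roots (line x)" "\<beta> \<noteq> (\<lambda>_. 0)"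
  shows "\<exists>k\<in>{1..CHAR('a) - 1}. (\<lambda>h. \<alpha> h + of_nat k * \<beta> h) \<notin> roots (line x)"
proof -
  obtain s where s: "\<alpha> = line_functional x s" "s \<in> {0, l, - l}"
    using assms(1) by (auto simp: roots_eq)
  obtain t where t: "\<beta> = line_functional x t" "t \<in> {l, - l}"
    using assms(2,3) by (auto simp: roots_eq line_functional_zero)
  obtain k :: nat where k: "k \<in> {1, 2, 3}" "s + of_nat k * t \<notin> {0, l, - l}"
    using root_string_leaves_roots[OF numerals_nonzero l_nonzero s(2) t(2)] by blast
  have "(\<lambda>h. \<alpha> h + of_nat k * \<beta> h) \<notin> roots (line x)"
    using k(2) by (simp add: s(1) t(1) line_functional_add_mult roots_eq
        line_functional_inject[OF nonzero(1)])
  moreover have "k \<in> {1..CHAR('a) - 1}"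
    using k(1) CHAR_gt_3 by auto
  ultimately show ?thesis
    by blast
qed

lemma cartan_line: "cartan (line x)"
  unfolding cartan_def
proof (intro conjI)
  show "subalgebra (line x)"
    unfolding subalgebra_def
    using lin_subspace_line line_subset_sl2[OF in_sl2(1)] lie_bracket_in_line_eq_zero[of _ x]
      zero_in_line[of x]
    by auto
  have "{lie_bracket p q | p q. p \<in> line x \<and> q \<in> lcs (line x) 0} = line 0"
    using lie_bracket_in_line_eq_zero zero_in_line by (force simp: line_zero)
  then have "lcs (line x) 1 = {0}"
    using lspan_lin_subspace[OF lin_subspace_line, of 0] by (simp add: line_zero)
  then show "nilpotent_alg (line x)"
    unfolding nilpotent_alg_def by blast
  show "normalizer (line x) = line x"
  proof
    show "normalizer (line x) \<subseteq> line x"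
    proof
      fix y assume "y \<in> normalizer (line x)"
      then have "y \<in> sl2" "lie_bracket y x \<in> line x"
        using in_line_self[of x] by (auto simp: normalizer_def)
      then obtain a b c d where y: "y = smul a x + smul b e + smul c f"
        and "lie_bracket y x = smul d x"
        using spanning by (meson in_lineE)
      then have "smul 0 x + smul (l * b) e + smul (- l * c) f = smul d x + smul 0 e + smul 0 f"
        by (simp add: bracket_coordinates)
      then have "l * b = 0" "- l * c = 0"
        using coordinates_unique by blast+
      then show "y \<in> line x"
        using y l_nonzero by (simp add: smul_in_line)
    qed
    show "line x \<subseteq> normalizer (line x)"
      using line_subset_sl2[OF in_sl2(1)] lie_bracket_in_line_eq_zero[of _ x] zero_in_line[of x]
      by (auto simp: normalizer_def)
  qed
qed

lemma classical_cartan_line: "classical_cartan (line x)"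
  unfolding classical_cartan_def
  using cartan_line root_space_decomposition root_brackets_one_dimensional root_strings_leave_roots
    lie_bracket_in_line_eq_zero[of _ x]
  by (auto simp: abelian_def)

end

definition pauli_x :: "'a::field mat2" where
  "pauli_x = mat2_of 0 1 1 0"

definition pauli_z :: "'a::field mat2" where
  "pauli_z = mat2_of 1 0 0 (- 1)"

lemma sl2_involution_fixed_vector:
  fixes u :: "'a::field mat2"
  assumes two: "(2::'a) \<noteq> 0" and u: "u \<in> sl2" "u ** u = mat 1"
  shows "\<exists>e. e \<noteq> 0 \<and> u *v e = e"
proof -
  have u22: "u$2$2 = - u$1$1"
    using u(1) by (simp add: sl2_iff)
  have "smul (- det u) (mat 1) = smul 1 (mat 1 :: 'a mat2)"
    using sl2_square[OF u(1)] u(2) by simp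
  then have "- det u = 1"
    by (rule smul_mat_one_cancel)
  then have det: "u$1$1 * u$1$1 + u$1$2 * u$2$1 = 1"
    using u22 by (simp add: det_2 algebra_simps)
  show ?thesis
  proof (cases "u$1$1 = -1")
    case True
    then have "u$1$2 * u$2$1 = 0"
      using det by simp
    then show ?thesis
      using True two u22
      by (intro exI[of _ "\<chi> i. if i = 1 then u$1$2 else 2"])
        (simp add: vec_eq_iff forall_2 matrix_vector_mult_def sum_2 algebra_simps)
  next
    case False
    then have "u$1$1 + 1 \<noteq> 0"
      using eq_neg_iff_add_eq_0 by blast
    then show ?thesis
      using det u22
      by (intro exI[of _ "\<chi> i. if i = 1 then u$1$1 + 1 else u$2$1"])
        (simp add: vec_eq_iff forall_2 matrix_vector_mult_def sum_2 algebra_simps)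
  qed
qed

lemma matrix_vector_mul_uminus: "(- A) *v w = - (A *v (w :: 'a::field^2))"
  by (simp add: vec_eq_iff matrix_vector_mult_def sum_negf)

lemma conjugate_eq_if_intertwines:
  assumes "P' ** P = mat 1" "u ** P = P ** z"
  shows "P' ** u ** P = z"
proof -
  have "P' ** u ** P = P' ** (P ** z)"
    by (simp add: matrix_mul_assoc[symmetric] assms(2))
  also have "\<dots> = z"
    by (simp add: matrix_mul_assoc assms(1))
  finally show ?thesis .
qed

lemma conjugation_mul:
  "g' ** g = mat 1 \<Longrightarrow> (g ** x ** g') ** (g ** y ** g') = g ** (x ** y) ** g'"
  by (simp add: matrix_mul_assoc) (simp add: matrix_mul_assoc[symmetric])

lemma conjugation_cancel: "g ** g' = mat 1 \<Longrightarrow> g ** (g' ** x ** g) ** g' = x"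
  by (metis matrix_mul_assoc matrix_mul_lid matrix_mul_rid)

lemma trace_conjugation:
  fixes g g' x :: "'a::field mat2"
  shows "g' ** g = mat 1 \<Longrightarrow> trace (g ** x ** g') = trace x"
  using trace_mul_sym[of "g ** x" g'] by (simp add: matrix_mul_assoc)

lemma conjugation_lie_automorphism:
  fixes g g' :: "'a::field mat2"
  assumes g: "g ** g' = mat 1" "g' ** g = mat 1"
  shows "lie_automorphism (\<lambda>x. g ** x ** g')"
  unfolding lie_automorphism_def
proof (intro conjI ballI allI)
  show "bij_betw (\<lambda>x. g ** x ** g') sl2 sl2"
    by (rule bij_betw_byWitness[where f' = "\<lambda>x. g' ** x ** g"])
      (use g trace_conjugation[OF g(1)] trace_conjugation[OF g(2)] conjugation_cancel[OF g(1)]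
        conjugation_cancel[OF g(2)] in \<open>auto simp: sl2_def\<close>)
  fix x y :: "'a mat2"
  show "g ** (x + y) ** g' = g ** x ** g' + g ** y ** g'"
    by (simp add: matrix_add_ldistrib matrix_add_rdistrib)
  show "g ** smul c x ** g' = smul c (g ** x ** g')" for c
    by (simp add: matrix_mul_smul_left matrix_mul_smul_right)
  show "g ** lie_bracket x y ** g' = lie_bracket (g ** x ** g') (g ** y ** g')"
    unfolding lie_bracket_def conjugation_mul[OF g(2)]
    by (simp add: mat2_simps algebra_simps)
qed

lemma conjugation_image_line: "(\<lambda>x. g ** x ** g') ` line z = line (g ** z ** g')"
proof
  show "(\<lambda>x. g ** x ** g') ` line z \<subseteq> line (g ** z ** g')"
    by (auto simp: line_def matrix_mul_smul_left matrix_mul_smul_right)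
  show "line (g ** z ** g') \<subseteq> (\<lambda>x. g ** x ** g') ` line z"
  proof
    fix w assume "w \<in> line (g ** z ** g')"
    then obtain c where "w = smul c (g ** z ** g')"
      by (rule in_lineE)
    then have "w = g ** smul c z ** g'"
      by (simp add: matrix_mul_smul_left matrix_mul_smul_right)
    then show "w \<in> (\<lambda>x. g ** x ** g') ` line z"
      using smul_in_line by blast
  qed
qed

lemma fixed_and_negated_vectors_independent:
  fixes u :: "'a::field mat2"
  assumes two: "(2::'a) \<noteq> 0" and "e \<noteq> 0" "f \<noteq> 0" and e: "u *v e = e" and f: "u *v f = - f"
  shows "e$1 * f$2 - e$2 * f$1 \<noteq> 0"
proof
  assume det: "e$1 * f$2 - e$2 * f$1 = 0"
  obtain k where fk1: "f$1 = k * e$1" and fk2: "f$2 = k * e$2"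
  proof (cases "e$1 = 0")
    case False
    then show ?thesis
      using det by (intro that[of "f$1 / e$1"]) (auto simp: field_simps)
  next
    case True
    then have "e$2 \<noteq> 0"
      using \<open>e \<noteq> 0\<close> by (simp add: vec_eq_iff forall_2)
    then show ?thesis
      using True det by (intro that[of "f$2 / e$2"]) (auto simp: field_simps)
  qed
  have fk: "f$i = k * e$i" for i
    using exhaust_2[of i] fk1 fk2 by auto
  have components: "u$i$1 * e$1 + u$i$2 * e$2 = e$i" "u$i$1 * f$1 + u$i$2 * f$2 = - f$i" for i
    using e f by (simp_all add: vec_eq_iff matrix_vector_mult_def sum_2)
  have "u$i$1 * f$1 + u$i$2 * f$2 = f$i" for i
  proof -
    have "u$i$1 * f$1 + u$i$2 * f$2 = k * (u$i$1 * e$1 + u$i$2 * e$2)"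
      by (simp add: fk algebra_simps)
    then show ?thesis
      using components(1)[of i] fk by simp
  qed
  then have "- f$i = f$i" for i
    using components(2) by metis
  then have "f$i + f$i = 0" for i
    by (metis add.right_inverse)
  then have "2 * f$i = 0" for i
    by (simp only: mult_2)
  then show False
    using two \<open>f \<noteq> 0\<close> by (simp add: vec_eq_iff)
qed

text \<open>An eigenbasis (e, v e) of u conjugates the pair (u, v) to (pauli_z, pauli_x).\<close>

lemma anticommuting_involutions_standard_form:
  fixes u v :: "'a::field mat2"
  assumes two: "(2::'a) \<noteq> 0" and u: "u \<in> sl2" "u ** u = mat 1" and v: "v ** v = mat 1"
    and anticommute: "u ** v = - (v ** u)"
  shows "\<exists>g g'. g ** g' = mat 1 \<and> g' ** g = mat 1 \<and> g ** u ** g' = pauli_z \<and> g ** v ** g' = pauli_x"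
proof -
  obtain e where e: "e \<noteq> 0" "u *v e = e"
    using sl2_involution_fixed_vector[OF two u] by blast
  define f where "f = v *v e"
  have uf: "u *v f = - f"
  proof -
    have "u *v f = (u ** v) *v e"
      by (simp add: f_def matrix_vector_mul_assoc)
    also have "\<dots> = - (v *v (u *v e))"
      by (simp add: anticommute matrix_vector_mul_uminus matrix_vector_mul_assoc)
    finally show ?thesis
      using e(2) f_def by simp
  qed
  have vf: "v *v f = e"
    using v by (simp add: f_def matrix_vector_mul_assoc)
  then have "f \<noteq> 0"
    using e(1) by auto
  define d where "d = e$1 * f$2 - e$2 * f$1"
  have "d \<noteq> 0"
    unfolding d_def by (rule fixed_and_negated_vectors_independent[OF two e(1) \<open>f \<noteq> 0\<close> e(2) uf])
  define P :: "'a mat2" where "P = mat2_of (e$1) (f$1) (e$2) (f$2)"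
  define P' :: "'a mat2" where "P' = smul (1 / d) (mat2_of (f$2) (- f$1) (- e$2) (e$1))"
  have inverse: "P ** P' = mat 1" "P' ** P = mat 1"
    using \<open>d \<noteq> 0\<close> unfolding P_def P'_def
    by (simp_all add: mat2_simps field_simps) (simp_all add: d_def algebra_simps)
  have "u$i$1 * e$1 + u$i$2 * e$2 = e$i" "u$i$1 * f$1 + u$i$2 * f$2 = - f$i"
    "v$i$1 * e$1 + v$i$2 * e$2 = f$i" "v$i$1 * f$1 + v$i$2 * f$2 = e$i" for i
    using e(2) uf vf f_def by (simp_all add: vec_eq_iff matrix_vector_mult_def sum_2)
  then have "u ** P = P ** pauli_z" "v ** P = P ** pauli_x"
    unfolding P_def pauli_z_def pauli_x_def by (simp_all add: mat2_simps)
  then have "P' ** u ** P = pauli_z" "P' ** v ** P = pauli_x"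
    using conjugate_eq_if_intertwines[OF inverse(2)] by blast+
  with inverse show ?thesis
    by blast
qed

lemma anticommuting_involution_pairs_conjugate:
  fixes u v u' v' :: "'a::field mat2"
  assumes two: "(2::'a) \<noteq> 0"
    and uv: "u \<in> sl2" "u ** u = mat 1" "v ** v = mat 1" "u ** v = - (v ** u)"
    and uv': "u' \<in> sl2" "u' ** u' = mat 1" "v' ** v' = mat 1" "u' ** v' = - (v' ** u')"
  shows "\<exists>g g'. g ** g' = mat 1 \<and> g' ** g = mat 1 \<and> g ** u ** g' = u' \<and> g ** v ** g' = v'"
proof -
  obtain p p' where p: "p ** p' = mat 1" "p' ** p = mat 1" "p ** u ** p' = pauli_z"
    "p ** v ** p' = pauli_x"
    using anticommuting_involutions_standard_form[OF two uv] by blast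
  obtain q q' where q: "q ** q' = mat 1" "q' ** q = mat 1" "q ** u' ** q' = pauli_z"
    "q ** v' ** q' = pauli_x"
    using anticommuting_involutions_standard_form[OF two uv'] by blast
  have "(q' ** p) ** (p' ** q) = q' ** (p ** p') ** q" "(p' ** q) ** (q' ** p) = p' ** (q ** q') ** p"
    by (simp_all add: matrix_mul_assoc)
  then have inverse: "(q' ** p) ** (p' ** q) = mat 1" "(p' ** q) ** (q' ** p) = mat 1"
    using p(1,2) q(1,2) by simp_all
  have conjugate: "(q' ** p) ** x ** (p' ** q) = q' ** (p ** x ** p') ** q" for x
    by (simp add: matrix_mul_assoc)
  have "(q' ** p) ** u ** (p' ** q) = u'" "(q' ** p) ** v ** (p' ** q) = v'"
    unfolding conjugate p(3,4) q(3,4)[symmetric] by (simp_all add: conjugation_cancel[OF q(2)])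
  with inverse show ?thesis
    by blast
qed

lemma anticommuting_involutions_product_square:
  fixes u v :: "'a::field mat2"
  assumes "u ** u = mat 1" "v ** v = mat 1" "u ** v = - (v ** u)"
  shows "(u ** v) ** (u ** v) = - mat 1"
proof -
  have vu: "v ** u = - (u ** v)"
    using assms(3) by simp
  have "(u ** v) ** (u ** v) = u ** ((v ** u) ** v)"
    by (simp add: matrix_mul_assoc)
  also have "\<dots> = - (u ** ((u ** v) ** v))"
    unfolding vu by (simp add: matrix_mul_minus_left matrix_mul_minus_right)
  also have "\<dots> = - mat 1"
    using assms(1,2) by (simp add: matrix_mul_assoc[symmetric])
  finally show ?thesis .
qed

lemma commutes_with_product_if_anticommutes:
  fixes u v w :: "'a::field mat2"
  assumes "u ** w = - (w ** u)" "v ** w = - (w ** v)"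
  shows "(u ** v) ** w = w ** (u ** v)"
proof -
  have "(u ** v) ** w = - ((u ** w) ** v)"
    unfolding matrix_mul_assoc[symmetric] assms(2) by (simp add: matrix_mul_minus_right)
  also have "\<dots> = w ** (u ** v)"
    unfolding assms(1) by (simp add: matrix_mul_minus_left matrix_mul_assoc)
  finally show ?thesis .
qed

lemma COD_component_involution_line:
  assumes "CHAR('a::{finite,field}) > 3" "is_COD (H :: nat \<Rightarrow> 'a mat2 set)" "i \<le> 2"
  shows "\<exists>u. u \<in> sl2 \<and> u ** u = mat 1 \<and> H i = line u"
  using classical_cartan_is_involution_line[OF assms(1)] assms(2,3) by (simp add: is_COD_def)

lemma COD_components_orthogonal:
  assumes "CHAR('a::{finite,field}) > 3" "is_COD (H :: nat \<Rightarrow> 'a mat2 set)"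
    and "i \<le> 2" "j \<le> 2" "i \<noteq> j" "x \<in> H i" "y \<in> H j"
  shows "trace (x ** y) = 0"
  using assms(2-) numerals_nonzero_if_CHAR_gt_3[OF assms(1)] by (auto simp: is_COD_def killing_def)

lemma COD_components_distinct:
  assumes "CHAR('a::{finite,field}) > 3" "is_COD (H :: nat \<Rightarrow> 'a mat2 set)"
    and "i \<le> 2" "j \<le> 2" "H i = H j"
  shows "i = j"
proof (rule ccontr)
  assume "i \<noteq> j"
  obtain u where "u ** u = mat 1" "H i = line u"
    using COD_component_involution_line[OF assms(1,2,3)] by blast
  then have "trace (mat 1 :: 'a mat2) = 0"
    using COD_components_orthogonal[OF assms(1,2,3,4) \<open>i \<noteq> j\<close>] assms(5) in_line_self by metis
  then show False
    using numerals_nonzero_if_CHAR_gt_3[OF assms(1)] by (simp add: trace_I)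
qed

lemma COD_involution_frame:
  fixes H :: "nat \<Rightarrow> 'a::{finite,field} mat2 set"
  assumes ch: "CHAR('a) > 3" and H: "is_COD H"
  shows "\<exists>u v w. u \<in> sl2 \<and> v \<in> sl2 \<and> w \<in> sl2 \<and> u ** u = mat 1 \<and> v ** v = mat 1 \<and> w ** w = mat 1
    \<and> u ** v = - (v ** u) \<and> u ** w = - (w ** u) \<and> v ** w = - (w ** v)
    \<and> H 0 = line u \<and> H 1 = line v \<and> H 2 = line w"
proof -
  obtain u where u: "u \<in> sl2" "u ** u = mat 1" "H 0 = line u"
    using COD_component_involution_line[OF ch H, of 0] by auto
  obtain v where v: "v \<in> sl2" "v ** v = mat 1" "H 1 = line v"
    using COD_component_involution_line[OF ch H, of 1] by auto
  obtain w where w: "w \<in> sl2" "w ** w = mat 1" "H 2 = line w"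
    using COD_component_involution_line[OF ch H, of 2] by auto
  have "trace (u ** v) = 0" "trace (u ** w) = 0" "trace (v ** w) = 0"
    using COD_components_orthogonal[OF ch H, of 0 1 u v] COD_components_orthogonal[OF ch H, of 0 2 u w]
      COD_components_orthogonal[OF ch H, of 1 2 v w] u(3) v(3) w(3) in_line_self
    by auto
  then have "u ** v = - (v ** u)" "u ** w = - (w ** u)" "v ** w = - (w ** v)"
    using trace_orthogonal_anticommute u v w by blast+
  with u v w show ?thesis
    by blast
qed

text \<open>The product of the first two involutions commutes with the third, hence is a multiple of
  it, and squares to -1; so -1 is a square.\<close>

lemma COD_frame:
  fixes H :: "nat \<Rightarrow> 'a::{finite,field} mat2 set"
  assumes ch: "CHAR('a) > 3" and H: "is_COD H"
  shows "\<exists>u v t. u \<in> sl2 \<and> v \<in> sl2 \<and> u ** u = mat 1 \<and> v ** v = mat 1 \<and> u ** v = - (v ** u)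
    \<and> t * t = (- 1 :: 'a) \<and> H 0 = line u \<and> H 1 = line v \<and> H 2 = line (u ** v)"
proof -
  have two: "(2::'a) \<noteq> 0"
    using numerals_nonzero_if_CHAR_gt_3[OF ch] by simp
  obtain u v w where sl2: "u \<in> sl2" "v \<in> sl2" "w \<in> sl2"
    and squares: "u ** u = mat 1" "v ** v = mat 1" "w ** w = mat 1"
    and anticommute: "u ** v = - (v ** u)" "u ** w = - (w ** u)" "v ** w = - (w ** v)"
    and lines: "H 0 = line u" "H 1 = line v" "H 2 = line w"
    using COD_involution_frame[OF ch H] by blast
  have "smul (trace (u ** v)) (mat 1) = smul 0 (mat 1 :: 'a mat2)"
    using sl2_anticommutator[OF sl2(1,2)] anticommute(1) by simp
  then have "trace (u ** v) = 0"
    by (rule smul_mat_one_cancel)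
  then have "u ** v \<in> sl2"
    by (simp add: sl2_def)
  moreover have "w \<noteq> 0"
    using squares(3) by (auto simp: mat2_simps)
  moreover have "lie_bracket (u ** v) w = 0"
    using commutes_with_product_if_anticommutes[OF anticommute(2,3)] by (simp add: lie_bracket_def)
  ultimately have "u ** v \<in> line w"
    using sl2_centralizer[OF two sl2(3)] by blast
  then obtain t where t: "u ** v = smul t w"
    by (rule in_lineE)
  then have "smul (t * t) (mat 1) = smul (- 1) (mat 1 :: 'a mat2)"
    using anticommuting_involutions_product_square[OF squares(1,2) anticommute(1)] squares(3)
    by (simp add: matrix_mul_smul_left matrix_mul_smul_right smul_minus_left[symmetric])
  then have tt: "t * t = - 1"
    by (rule smul_mat_one_cancel)
  have "t \<noteq> 0"
  proof
    assume "t = 0"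
    with tt show False
      by simp
  qed
  then have "H 2 = line (u ** v)"
    by (simp add: t lines(3) line_smul)
  with sl2 squares anticommute lines tt show ?thesis
    by blast
qed

lemma COD_unique:
  fixes H H' :: "nat \<Rightarrow> 'a::{finite,field} mat2 set"
  assumes ch: "CHAR('a) > 3" and H: "is_COD H" and H': "is_COD H'"
  shows "COD_conjugate H H'"
proof -
  have two: "(2::'a) \<noteq> 0"
    using numerals_nonzero_if_CHAR_gt_3[OF ch] by simp
  obtain u v where uv: "u \<in> sl2" "u ** u = mat 1" "v ** v = mat 1" "u ** v = - (v ** u)"
    and H_lines: "H 0 = line u" "H 1 = line v" "H 2 = line (u ** v)"
    using COD_frame[OF ch H] by blast
  obtain u' v' where uv': "u' \<in> sl2" "u' ** u' = mat 1" "v' ** v' = mat 1" "u' ** v' = - (v' ** u')"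
    and H'_lines: "H' 0 = line u'" "H' 1 = line v'" "H' 2 = line (u' ** v')"
    using COD_frame[OF ch H'] by blast
  obtain g g' where g: "g ** g' = mat 1" "g' ** g = mat 1" "g ** u ** g' = u'" "g ** v ** g' = v'"
    using anticommuting_involution_pairs_conjugate[OF two uv uv'] by blast
  define \<phi> where "\<phi> = (\<lambda>x. g ** x ** g')"
  have "\<phi> u = u'" "\<phi> v = v'"
    using g(3,4) by (simp_all add: \<phi>_def)
  have "\<phi> (u ** v) = u' ** v'"
    unfolding \<phi>_def conjugation_mul[OF g(2), symmetric] g(3,4) ..
  have image_line: "\<phi> ` line z = line (\<phi> z)" for z
    unfolding \<phi>_def by (rule conjugation_image_line)
  have images: "\<phi> ` H n = H' n" if "n \<le> 2" for n
  proof -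
    have "n = 0 \<or> n = 1 \<or> n = 2"
      using that by auto
    then show ?thesis
      by (elim disjE) (simp_all only: H_lines H'_lines image_line \<open>\<phi> u = u'\<close> \<open>\<phi> v = v'\<close>
          \<open>\<phi> (u ** v) = u' ** v'\<close>)
  qed
  show ?thesis
    unfolding COD_conjugate_def
  proof (intro exI[of _ \<phi>] conjI allI impI)
    show "lie_automorphism \<phi>"
      unfolding \<phi>_def by (rule conjugation_lie_automorphism[OF g(1,2)])
    fix n :: nat assume "n \<le> 2"
    then show "\<exists>!j. j \<le> 2 \<and> \<phi> ` H n = H' j"
      using images COD_components_distinct[OF ch H'] by metis
  qed
qed

section \<open>Squares in finite fields\<close>

lemma power_card_minus_one_eq_1:
  fixes x :: "'a::{finite,field}"
  assumes "x \<noteq> 0"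
  shows "x ^ (CARD('a) - 1) = 1"
proof -
  let ?U = "UNIV - {0::'a}"
  have inj: "inj_on ((*) x) ?U"
    using assms by (auto simp: inj_on_def)
  have image: "(*) x ` ?U = ?U"
  proof
    show "?U \<subseteq> (*) x ` ?U"
    proof
      fix z assume "z \<in> ?U"
      then have "z = x * (z / x)" "z / x \<in> ?U"
        using assms by auto
      then show "z \<in> (*) x ` ?U"
        by blast
    qed
  qed (use assms in auto)
  have "prod id ?U = prod id ((*) x ` ?U)"
    by (simp only: image)
  also have "\<dots> = prod ((*) x) ?U"
    using prod.reindex[OF inj, of id] by simp
  also have "\<dots> = x ^ card ?U * prod id ?U"
    by (simp add: prod.distrib)
  finally have "prod id ?U = x ^ card ?U * prod id ?U" .
  moreover have "prod id ?U \<noteq> 0"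
    by simp
  ultimately have "x ^ card ?U = 1"
    by (metis mult_cancel_right2)
  then show ?thesis
    by (simp add: card_Diff_singleton)
qed

lemma minus_one_square_imp_card_mod_4:
  fixes t :: "'a::{finite,field}"
  assumes t: "t * t = -1" and two: "(2::'a) \<noteq> 0"
  shows "CARD('a) mod 4 = 1"
proof -
  define n where "n = CARD('a) - 1"
  have "t ^ 4 = 1"
    using t by (simp add: power_numeral_reduce)
  moreover have "t \<noteq> 0"
  proof
    assume "t = 0"
    with t show False
      by simp
  qed
  then have "t ^ n = 1"
    unfolding n_def by (rule power_card_minus_one_eq_1)
  moreover have "n = 4 * (n div 4) + n mod 4"
    by simp
  ultimately have t_mod: "t ^ (n mod 4) = 1"
    by (metis power_add power_mult power_one mult_1)
  have minus_one: "(1::'a) \<noteq> - 1"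
    using two by (metis add.right_inverse one_add_one)
  have "n mod 4 \<noteq> 1" "n mod 4 \<noteq> 2" "n mod 4 \<noteq> 3"
  proof -
    show "n mod 4 \<noteq> 1"
      using t t_mod minus_one by auto
    show "n mod 4 \<noteq> 2"
      using t t_mod minus_one by (auto simp: power2_eq_square)
    have "t ^ 3 = - t"
      using t by (simp add: power_numeral_reduce)
    then show "n mod 4 \<noteq> 3"
      using t t_mod minus_one by (metis minus_equation_iff mult_minus1)
  qed
  then have "n mod 4 = 0"
    by linarith
  moreover have "CARD('a) > 0"
    by simp
  ultimately show ?thesis
    unfolding n_def by presburger
qed

text \<open>At most half of the nonzero elements are roots of x^((q-1)/2) - 1; any other nonzero a satisfies
  a^((q-1)/2) = -1, so a^((q-1)/4) squares to -1.\<close>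

lemma card_mod_4_imp_minus_one_square:
  assumes "CARD('a::{finite,field}) mod 4 = 1"
  shows "\<exists>i::'a. i * i = -1"
proof -
  have "card {0::'a, 1} \<le> CARD('a)"
    by (rule card_mono) auto
  then have "CARD('a) \<ge> 2"
    by simp
  define k where "k = (CARD('a) - 1) div 4"
  have k: "CARD('a) - 1 = 4 * k" "k \<ge> 1"
    using assms \<open>CARD('a) \<ge> 2\<close> unfolding k_def by presburger+
  define m where "m = 2 * k"
  define p :: "'a poly" where "p = monom 1 m - 1"
  have poly_p: "poly p x = x ^ m - 1" for x
    by (simp add: p_def poly_monom)
  have "p \<noteq> 0"
    using poly_p[of 0] k(2) by (auto simp: m_def power_0_left)
  moreover have "degree p \<le> m"
    unfolding p_def by (intro degree_diff_le degree_monom_le) simp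
  ultimately have "card {x. poly p x = 0} \<le> m"
    using card_poly_roots_bound by fastforce
  moreover have "m < card (UNIV - {0::'a})"
    using k by (simp add: m_def card_Diff_singleton)
  ultimately have "\<not> UNIV - {0::'a} \<subseteq> {x. poly p x = 0}"
    by (metis card_mono finite not_le order_le_less_trans)
  then obtain a :: 'a where a: "a \<noteq> 0" "a ^ m \<noteq> 1"
    using poly_p by auto
  have "a ^ m * a ^ m = 1"
    using power_card_minus_one_eq_1[OF a(1)] k by (simp add: m_def flip: power_add mult_2)
  then have "(a ^ m - 1) * (a ^ m + 1) = 0"
    by (simp add: algebra_simps)
  then have "a ^ k * a ^ k = -1"
    using a(2) by (simp add: m_def eq_neg_iff_add_eq_0 flip: power_add mult_2)
  then show ?thesis
    by blast
qed

section \<open>The Pauli COD\<close>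

definition pauli_y :: "'a::field \<Rightarrow> 'a mat2" where
  "pauli_y i = mat2_of 0 (- i) i 0"

definition pauli_COD :: "'a::field \<Rightarrow> nat \<Rightarrow> 'a mat2 set" where
  "pauli_COD i n = (if n = 0 then line pauli_z else if n = 1 then line pauli_x else line (pauli_y i))"

context
  fixes i :: "'a::{finite,field}"
  assumes CHAR_gt_3: "CHAR('a) > 3" and i_square: "i * i = -1"
begin

lemma i_mult_i_mult: "i * (i * z) = - z"
  using i_square by (metis mult.assoc mult_minus1)

lemma powers_of_two_nonzero: "(16::'a) \<noteq> 0" "(32::'a) \<noteq> 0"
proof -
  have "(2::'a) ^ k \<noteq> 0" for k
    using numerals_nonzero_if_CHAR_gt_3[OF CHAR_gt_3] by simp
  from this[of 4] this[of 5] show "(16::'a) \<noteq> 0" "(32::'a) \<noteq> 0"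
    by simp_all
qed

lemma cartan_triple_pauli_z:
  "cartan_triple (pauli_z :: 'a mat2) (mat2_of 0 0 1 0) (mat2_of 0 1 0 0) 2 (- 1)"
proof
  show "\<forall>y\<in>sl2. \<exists>a b c. y = smul a (pauli_z :: 'a mat2) + smul b (mat2_of 0 0 1 0)
      + smul c (mat2_of 0 1 0 0)"
  proof
    fix y :: "'a mat2" assume "y \<in> sl2"
    then have "y = smul (y$1$1) pauli_z + smul (y$2$1) (mat2_of 0 0 1 0)
        + smul (y$1$2) (mat2_of 0 1 0 0)"
      by (simp add: pauli_z_def mat2_simps sl2_iff)
    then show "\<exists>a b c. y = smul a pauli_z + smul b (mat2_of 0 0 1 0) + smul c (mat2_of 0 1 0 0)"
      by blast
  qed
qed (use CHAR_gt_3 numerals_nonzero_if_CHAR_gt_3[OF CHAR_gt_3] in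
    \<open>auto intro!: hyperbolic_triple_independent simp: pauli_z_def sl2_iff mat2_simps\<close>)

lemma cartan_triple_pauli_x:
  "cartan_triple (pauli_x :: 'a mat2) (mat2_of 1 1 (- 1) (- 1)) (mat2_of 1 (- 1) 1 (- 1)) 2 (- 4)"
proof
  show "\<forall>y\<in>sl2. \<exists>a b c. y = smul a (pauli_x :: 'a mat2) + smul b (mat2_of 1 1 (- 1) (- 1))
      + smul c (mat2_of 1 (- 1) 1 (- 1))"
  proof
    fix y :: "'a mat2" assume "y \<in> sl2"
    then have "y = smul ((y$1$2 + y$2$1) / 2) pauli_x
        + smul ((2 * y$1$1 + y$1$2 - y$2$1) / 4) (mat2_of 1 1 (- 1) (- 1))
        + smul ((2 * y$1$1 - y$1$2 + y$2$1) / 4) (mat2_of 1 (- 1) 1 (- 1))"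
      using numerals_nonzero_if_CHAR_gt_3[OF CHAR_gt_3] powers_of_two_nonzero
      by (simp add: pauli_x_def mat2_simps sl2_iff field_simps)
    then show "\<exists>a b c. y = smul a pauli_x + smul b (mat2_of 1 1 (- 1) (- 1))
        + smul c (mat2_of 1 (- 1) 1 (- 1))"
      by blast
  qed
qed (use CHAR_gt_3 numerals_nonzero_if_CHAR_gt_3[OF CHAR_gt_3] in
    \<open>auto intro!: hyperbolic_triple_independent simp: pauli_x_def sl2_iff mat2_simps\<close>)

lemma cartan_triple_pauli_y:
  "cartan_triple (pauli_y i) (mat2_of 1 (- i) (- i) (- 1)) (mat2_of 1 i i (- 1)) 2 (- 4)"
proof
  show "\<forall>y\<in>sl2. \<exists>a b c. y = smul a (pauli_y i) + smul b (mat2_of 1 (- i) (- i) (- 1))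
      + smul c (mat2_of 1 i i (- 1))"
  proof
    fix y :: "'a mat2" assume "y \<in> sl2"
    then have "y = smul (i * (y$1$2 - y$2$1) / 2) (pauli_y i)
        + smul ((y$1$1 + i * (y$1$2 + y$2$1) / 2) / 2) (mat2_of 1 (- i) (- i) (- 1))
        + smul ((y$1$1 - i * (y$1$2 + y$2$1) / 2) / 2) (mat2_of 1 i i (- 1))"
      using numerals_nonzero_if_CHAR_gt_3[OF CHAR_gt_3] powers_of_two_nonzero i_square
      by (simp add: pauli_y_def mat2_simps sl2_iff field_simps) (simp add: algebra_simps i_mult_i_mult)
    then show "\<exists>a b c. y = smul a (pauli_y i) + smul b (mat2_of 1 (- i) (- i) (- 1))
        + smul c (mat2_of 1 i i (- 1))"
      by blast
  qed
qed (use CHAR_gt_3 numerals_nonzero_if_CHAR_gt_3[OF CHAR_gt_3] i_square in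
    \<open>auto intro!: hyperbolic_triple_independent simp: pauli_y_def sl2_iff mat2_simps\<close>)

lemma pauli_spanning: "\<forall>y\<in>sl2. \<exists>a b c. y = smul a pauli_z + smul b pauli_x + smul c (pauli_y i)"
proof
  fix y :: "'a mat2" assume "y \<in> sl2"
  then have "y = smul (y$1$1) pauli_z + smul ((y$1$2 + y$2$1) / 2) pauli_x
      + smul (i * (y$1$2 - y$2$1) / 2) (pauli_y i)"
    using numerals_nonzero_if_CHAR_gt_3[OF CHAR_gt_3] i_square
    by (simp add: pauli_x_def pauli_y_def pauli_z_def mat2_simps sl2_iff field_simps)
      (simp add: algebra_simps i_mult_i_mult)
  then show "\<exists>a b c. y = smul a pauli_z + smul b pauli_x + smul c (pauli_y i)"
    by blast
qed

lemma pauli_independent: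
  "\<forall>a b c. smul a pauli_z + smul b pauli_x + smul c (pauli_y i) = 0 \<longrightarrow> a = 0 \<and> b = 0 \<and> c = 0"
  using numerals_nonzero_if_CHAR_gt_3[OF CHAR_gt_3] i_square
  by (auto intro!: orthogonal_triple_independent simp: pauli_x_def pauli_y_def pauli_z_def mat2_simps)

lemma is_COD_pauli_COD: "is_COD (pauli_COD i)"
  unfolding is_COD_def
proof (intro conjI allI impI ballI)
  fix n :: nat assume "n \<le> 2"
  then show "classical_cartan (pauli_COD i n)"
    using cartan_triple.classical_cartan_line[OF cartan_triple_pauli_z]
      cartan_triple.classical_cartan_line[OF cartan_triple_pauli_x]
      cartan_triple.classical_cartan_line[OF cartan_triple_pauli_y]
    by (auto simp: pauli_COD_def le_Suc_eq numeral_2_eq_2)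
next
  fix m n :: nat and x y :: "'a mat2"
  assume "m \<le> 2" "n \<le> 2" "m \<noteq> n" "x \<in> pauli_COD i m" "y \<in> pauli_COD i n"
  moreover have "trace (pauli_z ** pauli_x) = (0::'a)" "trace (pauli_x ** pauli_z) = (0::'a)"
    "trace (pauli_z ** pauli_y i) = 0" "trace (pauli_y i ** pauli_z) = 0"
    "trace (pauli_x ** pauli_y i) = 0" "trace (pauli_y i ** pauli_x) = 0"
    by (simp_all add: pauli_x_def pauli_y_def pauli_z_def mat2_simps)
  ultimately show "killing x y = 0"
    by (auto simp: pauli_COD_def le_Suc_eq numeral_2_eq_2 line_def killing_smul)
next
  fix y :: "'a mat2" assume "y \<in> sl2"
  then show "\<exists>!h. (\<forall>n\<le>2. h n \<in> pauli_COD i n) \<and> (\<forall>n>2. h n = 0) \<and> y = (\<Sum>n\<le>2. h n)"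
    using pauli_spanning pauli_independent
    by (intro direct_sum_of_lines) (simp_all add: pauli_COD_def)
qed

end

theorem corollary3p3:
  assumes "CHAR('a::{finite,field}) > 3"
  shows "((\<exists>H :: nat \<Rightarrow> 'a mat2 set. is_COD H)
           \<and> (\<forall>H H' :: nat \<Rightarrow> 'a mat2 set. is_COD H \<longrightarrow> is_COD H' \<longrightarrow> COD_conjugate H H'))
         \<longleftrightarrow> CARD('a) mod 4 = 1"
proof
  assume "(\<exists>H :: nat \<Rightarrow> 'a mat2 set. is_COD H)
    \<and> (\<forall>H H' :: nat \<Rightarrow> 'a mat2 set. is_COD H \<longrightarrow> is_COD H' \<longrightarrow> COD_conjugate H H')"
  then obtain H :: "nat \<Rightarrow> 'a mat2 set" where "is_COD H"
    by blast
  then obtain t :: 'a where "t * t = - 1"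
    using COD_frame[OF assms] by blast
  then show "CARD('a) mod 4 = 1"
    using minus_one_square_imp_card_mod_4 numerals_nonzero_if_CHAR_gt_3[OF assms] by blast
next
  assume "CARD('a) mod 4 = 1"
  then obtain i :: 'a where "i * i = - 1"
    using card_mod_4_imp_minus_one_square by blast
  then show "(\<exists>H :: nat \<Rightarrow> 'a mat2 set. is_COD H)
    \<and> (\<forall>H H' :: nat \<Rightarrow> 'a mat2 set. is_COD H \<longrightarrow> is_COD H' \<longrightarrow> COD_conjugate H H')"
    using is_COD_pauli_COD[OF assms] COD_unique[OF assms] by blast
qed

end
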